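(* Let $K^G, K^F, T \ge 1$ be integers and $p = K^G + T K^F$. Let $\boldsymbol{\Sigma}$ be a $p \times p$ symmetric positive definite matrix partitioned into blocks (rows and columns indexed first by a $G$-block of size $K^G$ and then by $K^F$ consecutive $F$-blocks $F_1,\dots,F_{K^F}$, each of size $T$) of the form $$\boldsymbol{\Sigma}=\begin{bmatrix} \boldsymbol{\Sigma}_{GG} & \boldsymbol{\Sigma}_{GF_1} & \cdots & \boldsymbol{\Sigma}_{GF_{K^F}} \\ \boldsymbol{\Sigma}_{GF_1}^\intercal & \boldsymbol{\Sigma}_{F_1F_1} & & \boldsymbol{0} \\ \vdots & & \ddots & \\ \boldsymbol{\Sigma}_{GF_{K^F}}^\intercal & \boldsymbol{0} & & \boldsymbol{\Sigma}_{F_{K^F}F_{K^F}} \end{bmatrix},$$ where $\boldsymbol{\Sigma}_{GG}$ is a $K^G\times K^G$ diagonal matrix, each $\boldsymbol{\Sigma}_{F_kF_k}$ is $T\times T$, each $\boldsymbol{\Sigma}_{GF_k}$ is $K^G \times T$, and all blocks between $F_k$ and $F_l$ with $k\neq l$ are zero. For $k_1,k_2\in\{1,\dots,K^F\}$ write $k_1\sim k_2$ if and only if there exists $g\in\{1,\dots,K^G\}$ such that the $g$-th row of $\boldsymbol{\Sigma}_{GF_{k_1}}$ and the $g$-th row of $\boldsymbol{\Sigma}_{GF_{k_2}}$ are both nonzero vectors, and assume that $\sim$ is a partial equivalence relation (i.e., it is transitive; it is symmetric by definition). Let $\boldsymbol{\Sigma}^{-1}=\mathbf{L}^\intercal\mathbf{D}^{-1}\mathbf{L}$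 be the (unique) decomposition with $\mathbf{L}$ lower triangular with unit diagonal and $\mathbf{D}$ diagonal with positive entries, and set $\boldsymbol{\zeta}=\mathbf{I}-\mathbf{L}$ with entries $\zeta_{ji}$. Then for all $k_1<k_2$ in $\{1,\dots,K^F\}$ with $k_1\nsim k_2$, we have $\zeta_{ji}=0$ for all $i\in\{K^G+(k_1-1)T+1,\dots,K^G+k_1T\}$ and all $j\in\{K^G+(k_2-1)T+1,\dots,K^G+k_2T\}$.
   Context: Equivalently, if $(\gamma_1,\dots,\gamma_p)$ is a mean-zero random vector with covariance $\boldsymbol{\Sigma}$, then for $j>1$, $(\zeta_{j1},\dots,\zeta_{j,j-1})$ are the coefficients of the best linear predictor of $\gamma_j$ from $\gamma_1,\dots,\gamma_{j-1}$ (with $\zeta_{jk}=0$ for $k\ge j$), and $\mathbf{D}$ is the diagonal matrix of the corresponding residual variances. In the paper, $\boldsymbol{\Sigma}=\boldsymbol{\Sigma}_{\boldsymbol{\gamma}}+\sigma_\epsilon^2\mathbf{I}_p$ is the covariance of combined random effects and errors for geometric principal component projections (the $G$-block) and time series of length $T$ of projections on $K^F$ functional principal components (the $F$-blocks). *)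

theory Defs
  imports "Jordan_Normal_Form.Matrix"
begin

text \<open>Matrices are Jordan_Normal_Form matrices with 0-based indices.
  G-block: indices 0..<KG.  F-block number k (1-based, k = 1..KF):
  indices KG+(k-1)*T ..< KG+k*T.\<close>

definition fblock :: "nat \<Rightarrow> nat \<Rightarrow> nat \<Rightarrow> nat set" where
  "fblock KG T k = {KG + (k - 1) * T ..< KG + k * T}"

definition sym_mat :: "real mat \<Rightarrow> bool" where
  "sym_mat A \<longleftrightarrow> transpose_mat A = A"

definition pos_def_mat :: "nat \<Rightarrow> real mat \<Rightarrow> bool" where
  "pos_def_mat n A \<longleftrightarrow> A \<in> carrier_mat n n \<and>
     (\<forall>v \<in> carrier_vec n. v \<noteq> 0\<^sub>v n \<longrightarrow> v \<bullet> (A *\<^sub>v v) > 0)"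

definition unit_lower_triangular :: "nat \<Rightarrow> real mat \<Rightarrow> bool" where
  "unit_lower_triangular n L \<longleftrightarrow> L \<in> carrier_mat n n \<and>
     (\<forall>i<n. L $$ (i, i) = 1) \<and> (\<forall>i<n. \<forall>j<n. i < j \<longrightarrow> L $$ (i, j) = 0)"

definition pos_diagonal :: "nat \<Rightarrow> real mat \<Rightarrow> bool" where
  "pos_diagonal n D \<longleftrightarrow> D \<in> carrier_mat n n \<and>
     (\<forall>i<n. D $$ (i, i) > 0) \<and> (\<forall>i<n. \<forall>j<n. i \<noteq> j \<longrightarrow> D $$ (i, j) = 0)"

definition diag_inv :: "nat \<Rightarrow> real mat \<Rightarrow> real mat" where
  "diag_inv n D = mat n n (\<lambda>(i, j). if i = j then 1 / D $$ (i, i) else 0)"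

definition frel :: "nat \<Rightarrow> nat \<Rightarrow> real mat \<Rightarrow> nat \<Rightarrow> nat \<Rightarrow> bool" where
  "frel KG T S k1 k2 \<longleftrightarrow> (\<exists>g<KG.
      (\<exists>t\<in>fblock KG T k1. S $$ (g, t) \<noteq> 0) \<and> (\<exists>t\<in>fblock KG T k2. S $$ (g, t) \<noteq> 0))"

end

theory Submission
  imports Defs "Jordan_Normal_Form.Determinant"
begin

text \<open>From \<open>\<Sigma>\<^sup>-\<^sup>1 = L\<^sup>T D\<^sup>-\<^sup>1 L\<close> we get \<open>L \<Sigma> = D L\<^sup>-\<^sup>T\<close>, which is upper triangular.
  Suppose the coordinates split into a set \<open>X\<close> containing \<open>j\<close> and its complement, with \<open>\<Sigma>\<close>
  vanishing between the two. Let \<open>v\<close> be the part of row \<open>j\<close> of \<open>L\<close> supported on coordinates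
  \<open>m < j\<close> outside \<open>X\<close>. On its support \<open>(\<Sigma> v)\<^sub>m = (L \<Sigma>)\<^sub>j\<^sub>m = 0\<close>, so \<open>v\<^sup>T \<Sigma> v = 0\<close> and \<open>v = 0\<close>
  by positive definiteness: \<open>L\<^sub>j\<^sub>i = 0\<close> for every \<open>i < j\<close> outside \<open>X\<close>.
  For \<open>j\<close> in \<open>F\<^sub>k\<^sub>2\<close> take \<open>X\<close> to be the \<open>F\<close>-blocks of the \<open>\<sim>\<close>-class of \<open>k\<^sub>2\<close> together with
  the \<open>G\<close>-coordinates coupled to one of them. Diagonality of \<open>\<Sigma>\<^sub>G\<^sub>G\<close>, the zero \<open>F\<^sub>kF\<^sub>l\<close> blocks
  and transitivity of \<open>\<sim>\<close> make \<open>\<Sigma>\<close> vanish between \<open>X\<close> and its complement, and \<open>F\<^sub>k\<^sub>1\<close> lies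
  outside \<open>X\<close> when \<open>k\<^sub>1 \<nsim> k\<^sub>2\<close>.\<close>

lemma index_mult_mat_sum:
  fixes A B :: "'a::comm_semiring_0 mat"
  assumes "A \<in> carrier_mat n n" "B \<in> carrier_mat n n" "i < n" "j < n"
  shows "(A * B) $$ (i, j) = (\<Sum>k<n. A $$ (i, k) * B $$ (k, j))"
  using assms by (auto simp: scalar_prod_def lessThan_atLeast0 intro!: sum.cong)

lemma upper_triangular_right_inverse:
  fixes U Q :: "'a::field mat"
  assumes U: "U \<in> carrier_mat n n" and Q: "Q \<in> carrier_mat n n"
    and UQ: "U * Q = 1\<^sub>m n" and upper: "upper_triangular U"
    and diag: "\<And>r. r < n \<Longrightarrow> U $$ (r, r) \<noteq> 0"
  shows "upper_triangular Q"
proof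
  fix r m assume "m < r" "r < dim_row Q"
  then show "Q $$ (r, m) = 0"
  proof (induction "n - r" arbitrary: r rule: less_induct)
    case (less r)
    have rn: "r < n" and mn: "m < n" using less.prems Q by auto
    have rest: "(\<Sum>s\<in>{..<n} - {r}. U $$ (r, s) * Q $$ (s, m)) = 0"
    proof (rule sum.neutral, intro ballI)
      fix s assume s: "s \<in> {..<n} - {r}"
      show "U $$ (r, s) * Q $$ (s, m) = 0"
      proof (cases "s < r")
        case True
        then show ?thesis using upper U rn by auto
      next
        case False
        then have "Q $$ (s, m) = 0" using less.hyps[of s] less.prems s Q by auto
        then show ?thesis by simp
      qed
    qed
    have "0 = (U * Q) $$ (r, m)" using UQ less.prems rn mn by simp
    also have "\<dots> = (\<Sum>s<n. U $$ (r, s) * Q $$ (s, m))"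
      using index_mult_mat_sum[OF U Q rn mn] .
    also have "\<dots> = U $$ (r, r) * Q $$ (r, m)"
      using rest rn by (simp add: sum.remove[of "{..<n}" r])
    finally show ?case using diag[OF rn] by simp
  qed
qed

lemma upper_triangular_L_mult_of_LDL_inverse:
  fixes S L D :: "real mat"
  assumes S: "S \<in> carrier_mat n n" and L: "unit_lower_triangular n L"
    and D: "pos_diagonal n D"
    and inv: "S * (transpose_mat L * diag_inv n D * L) = 1\<^sub>m n"
  shows "upper_triangular (L * S)"
proof -
  define U where "U = transpose_mat L * diag_inv n D"
  have Lc: "L \<in> carrier_mat n n" using L unfolding unit_lower_triangular_def by blast
  have Dic: "diag_inv n D \<in> carrier_mat n n" unfolding diag_inv_def by simp
  have Uc: "U \<in> carrier_mat n n" unfolding U_def using Lc Dic by simp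
  have U_entry: "U $$ (r, s) = L $$ (s, r) / D $$ (s, s)" if "r < n" "s < n" for r s
  proof -
    have "U $$ (r, s) = (\<Sum>t<n. L $$ (t, r) * diag_inv n D $$ (t, s))"
      unfolding U_def using index_mult_mat_sum[of "transpose_mat L" n "diag_inv n D"] Lc Dic that
      by simp
    also have "\<dots> = (\<Sum>t<n. if t = s then L $$ (s, r) / D $$ (s, s) else 0)"
      using that by (intro sum.cong) (auto simp: diag_inv_def)
    finally show ?thesis using that by simp
  qed
  have "U * (L * S) = transpose_mat L * diag_inv n D * L * S"
    unfolding U_def using Lc Dic S by (simp add: assoc_mult_mat[of _ n n _ n _ n])
  also have "\<dots> = 1\<^sub>m n"
    using mat_mult_left_right_inverse[OF S _ inv] Lc Dic by simp
  finally have UQ: "U * (L * S) = 1\<^sub>m n" .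
  have "upper_triangular U"
    using Uc U_entry L unfolding unit_lower_triangular_def by auto
  moreover have "U $$ (r, r) \<noteq> 0" if "r < n" for r
    using U_entry[OF that that] that L D
    unfolding unit_lower_triangular_def pos_diagonal_def by auto
  ultimately show ?thesis
    using upper_triangular_right_inverse[OF Uc _ UQ] Lc S by auto
qed

lemma sym_mat_index:
  assumes "sym_mat S" "a < dim_row S" "b < dim_row S"
  shows "S $$ (a, b) = S $$ (b, a)"
  using assms unfolding sym_mat_def by (metis index_transpose_mat(1,3))

lemma lower_factor_zero_across_uncorrelated_split:
  fixes S L :: "real mat"
  assumes "sym_mat S" and pd: "pos_def_mat n S" and Lc: "L \<in> carrier_mat n n"
    and L_lower: "\<And>r s. r < s \<Longrightarrow> s < n \<Longrightarrow> L $$ (r, s) = 0"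
    and LS_upper: "upper_triangular (L * S)"
    and split: "\<And>k m. k \<in> X \<Longrightarrow> m < n \<Longrightarrow> m \<notin> X \<Longrightarrow> S $$ (k, m) = 0"
    and "j \<in> X" "i \<notin> X" "i < j" "j < n"
  shows "L $$ (j, i) = 0"
proof -
  have S: "S \<in> carrier_mat n n" using pd unfolding pos_def_mat_def by blast
  define v where "v = vec n (\<lambda>k. if k < j \<and> k \<notin> X then L $$ (j, k) else 0)"
  have v: "v \<in> carrier_vec n" unfolding v_def by simp
  have Sv: "(S *\<^sub>v v) $ m = 0" if "m < n" "v $ m \<noteq> 0" for m
  proof -
    have m: "m < j" "m \<notin> X" using that unfolding v_def by (auto split: if_splits)
    have "(S *\<^sub>v v) $ m = (\<Sum>k<n. S $$ (m, k) * v $ k)"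
      using S that v by (auto simp: scalar_prod_def lessThan_atLeast0 intro!: sum.cong)
    also have "\<dots> = (\<Sum>k<n. L $$ (j, k) * S $$ (k, m))"
    proof (rule sum.cong[OF refl])
      fix k assume "k \<in> {..<n}"
      then have k: "k < n" by simp
      show "S $$ (m, k) * v $ k = L $$ (j, k) * S $$ (k, m)"
      proof (cases "k < j \<and> k \<notin> X")
        case True
        then show ?thesis using k S \<open>m < n\<close> sym_mat_index[OF \<open>sym_mat S\<close>, of m k] unfolding v_def by simp
      next
        case False
        then have "j < k \<or> k \<in> X" using \<open>j \<in> X\<close> by (cases "k = j") auto
        then have "L $$ (j, k) * S $$ (k, m) = 0"
          using L_lower split k m \<open>m < n\<close> by auto
        then show ?thesis using False k unfolding v_def by auto
      qed
    qed
    also have "\<dots> = (L * S) $$ (j, m)"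
      using index_mult_mat_sum[OF Lc S \<open>j < n\<close> \<open>m < n\<close>] by simp
    also have "\<dots> = 0" using LS_upper m Lc \<open>j < n\<close> by auto
    finally show ?thesis .
  qed
  have "v \<bullet> (S *\<^sub>v v) = (\<Sum>m<n. v $ m * (S *\<^sub>v v) $ m)"
    using S by (simp add: scalar_prod_def lessThan_atLeast0)
  also have "\<dots> = 0" using Sv by (intro sum.neutral) (metis lessThan_iff mult_eq_0_iff)
  finally have "v = 0\<^sub>v n" using pd v unfolding pos_def_mat_def by force
  then have "v $ i = 0" using \<open>i < j\<close> \<open>j < n\<close> by simp
  then show ?thesis using \<open>i \<notin> X\<close> \<open>i < j\<close> \<open>j < n\<close> unfolding v_def by simp
qed

lemma fblock_iff:
  assumes "T > 0" "k \<ge> 1"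
  shows "n \<in> fblock KG T k \<longleftrightarrow> KG \<le> n \<and> (n - KG) div T = k - 1"
proof -
  obtain k' where k: "k = Suc k'" using assms by (cases k) auto
  have "n \<in> fblock KG T k \<longleftrightarrow> KG \<le> n \<and> T * k' \<le> n - KG \<and> n - KG < T * Suc k'"
    unfolding fblock_def k by (auto simp: algebra_simps)
  also have "\<dots> \<longleftrightarrow> KG \<le> n \<and> (n - KG) div T = k - 1"
    using assms unfolding k by (auto intro: div_nat_eqI dividend_less_times_div)
  finally show ?thesis .
qed

lemma fblock_cover:
  assumes "T > 0" "KG \<le> n" "n < KG + T * KF"
  shows "\<exists>l\<in>{1..KF}. n \<in> fblock KG T l"
proof -
  have "(n - KG) div T < KF" using assms by (simp add: div_less_iff_less_mult mult.commute)
  then show ?thesis using fblock_iff[OF \<open>T > 0\<close>, of "(n - KG) div T + 1"] assms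
    by (intro bexI[of _ "(n - KG) div T + 1"]) auto
qed

lemma fblock_less_dim:
  assumes "n \<in> fblock KG T k" "k \<le> KF"
  shows "n < KG + T * KF"
proof -
  have "n < KG + k * T" using assms(1) unfolding fblock_def by simp
  moreover have "k * T \<le> KF * T" using assms(2) by (rule mult_le_mono1)
  ultimately have "n < KG + KF * T" by linarith
  then show ?thesis by (simp add: mult.commute)
qed

lemma fblock_less:
  assumes "T > 0" "1 \<le> k" "k < l" "i \<in> fblock KG T k" "j \<in> fblock KG T l"
  shows "i < j"
proof -
  have "(i - KG) div T < (j - KG) div T" "KG \<le> i" "KG \<le> j"
    using assms fblock_iff[OF \<open>T > 0\<close>] by auto
  then have "i - KG < j - KG" by (meson div_le_mono not_le)
  then show ?thesis by simp
qed

definition coupled :: "nat \<Rightarrow> nat \<Rightarrow> real mat \<Rightarrow> nat \<Rightarrow> nat \<Rightarrow> bool" where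
  "coupled KG T S g k \<longleftrightarrow> (\<exists>t\<in>fblock KG T k. S $$ (g, t) \<noteq> 0)"

lemma frel_iff_coupled:
  "frel KG T S a b \<longleftrightarrow> (\<exists>g<KG. coupled KG T S g a \<and> coupled KG T S g b)"
  unfolding frel_def coupled_def by blast

definition frel_class :: "nat \<Rightarrow> nat \<Rightarrow> nat \<Rightarrow> real mat \<Rightarrow> nat \<Rightarrow> nat set" where
  "frel_class KG KF T S k = {b \<in> {1..KF}. b = k \<or> frel KG T S b k}"

definition class_indices :: "nat \<Rightarrow> nat \<Rightarrow> nat \<Rightarrow> real mat \<Rightarrow> nat \<Rightarrow> nat set" where
  "class_indices KG KF T S k =
     {g. g < KG \<and> (\<exists>b\<in>frel_class KG KF T S k. coupled KG T S g b)}
     \<union> (\<Union>b\<in>frel_class KG KF T S k. fblock KG T b)"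

lemma class_indices_uncorrelated:
  fixes S :: "real mat"
  assumes "T > 0" and p: "p = KG + T * KF"
    and "sym_mat S" and S: "S \<in> carrier_mat p p"
    and GG_diag: "\<forall>g<KG. \<forall>h<KG. g \<noteq> h \<longrightarrow> S $$ (g, h) = 0"
    and FF_zero: "\<forall>k\<in>{1..KF}. \<forall>l\<in>{1..KF}. k \<noteq> l \<longrightarrow>
        (\<forall>i\<in>fblock KG T k. \<forall>j\<in>fblock KG T l. S $$ (i, j) = 0)"
    and trans: "\<forall>a\<in>{1..KF}. \<forall>b\<in>{1..KF}. \<forall>c\<in>{1..KF}.
        frel KG T S a b \<longrightarrow> frel KG T S b c \<longrightarrow> frel KG T S a c"
    and k: "k \<in> {1..KF}"
    and x: "x \<in> class_indices KG KF T S k" and m: "m < p" "m \<notin> class_indices KG KF T S k"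
  shows "S $$ (x, m) = 0"
proof -
  let ?C = "frel_class KG KF T S k"
  obtain b where b: "b \<in> ?C" and "x < KG \<and> coupled KG T S x b \<or> x \<in> fblock KG T b"
    using x unfolding class_indices_def by auto
  then consider (G) "x < KG" "coupled KG T S x b" | (F) "x \<in> fblock KG T b" by blast
  note cases_x = this
  have bK: "b \<in> {1..KF}" using b unfolding frel_class_def by simp
  show ?thesis
  proof (cases "m < KG")
    case True
    then have m_uncoupled: "\<not> coupled KG T S m b" using m b unfolding class_indices_def by auto
    show ?thesis
    proof (cases rule: cases_x)
      case G
      then show ?thesis using GG_diag True m_uncoupled by auto
    next
      case F
      then have "S $$ (m, x) = 0" using m_uncoupled unfolding coupled_def by auto
      moreover have "x < p" using F bK fblock_less_dim p by auto
      ultimately show ?thesis using sym_mat_index[OF \<open>sym_mat S\<close>] S m by auto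
    qed
  next
    case False
    then obtain l where l: "l \<in> {1..KF}" "m \<in> fblock KG T l"
      using fblock_cover[OF \<open>T > 0\<close>, of KG m KF] m(1) p by auto
    have l_out: "l \<notin> ?C" using m(2) l(2) unfolding class_indices_def by blast
    show ?thesis
    proof (cases rule: cases_x)
      case G
      show ?thesis
      proof (rule ccontr)
        assume "S $$ (x, m) \<noteq> 0"
        then have "coupled KG T S x l" using l unfolding coupled_def by auto
        then have "frel KG T S l b" using G frel_iff_coupled by blast
        moreover have "b = k \<or> frel KG T S b k" using b unfolding frel_class_def by simp
        ultimately have "frel KG T S l k"
          using trans l(1) bK k by blast
        then show False using l_out l unfolding frel_class_def by simp
      qed
    next
      case F
      moreover have "b \<noteq> l" using b l_out by auto
      ultimately show ?thesis using FF_zero bK l by blast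
    qed
  qed
qed

theorem proposition1:
  fixes KG KF T p :: nat and Sigma L D :: "real mat"
  assumes "KG \<ge> 1" and "KF \<ge> 1" and "T \<ge> 1"
    and p_def: "p = KG + T * KF"
    and "sym_mat Sigma" and "pos_def_mat p Sigma"
    and GG_diag: "\<forall>g<KG. \<forall>h<KG. g \<noteq> h \<longrightarrow> Sigma $$ (g, h) = 0"
    and FF_zero: "\<forall>k\<in>{1..KF}. \<forall>l\<in>{1..KF}. k \<noteq> l \<longrightarrow>
        (\<forall>i\<in>fblock KG T k. \<forall>j\<in>fblock KG T l. Sigma $$ (i, j) = 0)"
    and trans: "\<forall>a\<in>{1..KF}. \<forall>b\<in>{1..KF}. \<forall>c\<in>{1..KF}.
        frel KG T Sigma a b \<longrightarrow> frel KG T Sigma b c \<longrightarrow> frel KG T Sigma a c"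
    and "unit_lower_triangular p L" and "pos_diagonal p D"
    and inv: "Sigma * (transpose_mat L * diag_inv p D * L) = 1\<^sub>m p"
  shows "\<forall>k1\<in>{1..KF}. \<forall>k2\<in>{1..KF}. k1 < k2 \<longrightarrow> \<not> frel KG T Sigma k1 k2 \<longrightarrow>
           (\<forall>i\<in>fblock KG T k1. \<forall>j\<in>fblock KG T k2. (1\<^sub>m p - L) $$ (j, i) = 0)"
proof (intro ballI impI)
  fix k1 k2 i j
  assume k1: "k1 \<in> {1..KF}" and k2: "k2 \<in> {1..KF}" and "k1 < k2"
    and unrelated: "\<not> frel KG T Sigma k1 k2"
    and i: "i \<in> fblock KG T k1" and j: "j \<in> fblock KG T k2"
  let ?X = "class_indices KG KF T Sigma k2"
  have T: "T > 0" using \<open>T \<ge> 1\<close> by simp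
  have S: "Sigma \<in> carrier_mat p p" using \<open>pos_def_mat p Sigma\<close> unfolding pos_def_mat_def by blast
  have L: "L \<in> carrier_mat p p" "\<And>r s. r < s \<Longrightarrow> s < p \<Longrightarrow> L $$ (r, s) = 0"
    using \<open>unit_lower_triangular p L\<close> unfolding unit_lower_triangular_def by auto
  have "i < j" using fblock_less[OF T _ \<open>k1 < k2\<close> i j] k1 by simp
  moreover have "j < p" using fblock_less_dim[OF j] k2 p_def by simp
  moreover have "j \<in> ?X" using j k2 unfolding class_indices_def frel_class_def by auto
  moreover have "i \<notin> ?X"
  proof
    assume "i \<in> ?X"
    moreover have "\<not> i < KG" using i unfolding fblock_def by simp
    ultimately obtain b where "b \<in> frel_class KG KF T Sigma k2" "i \<in> fblock KG T b"
      unfolding class_indices_def by blast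
    then have "b = k1" using fblock_iff[OF T] i k1 unfolding frel_class_def by auto
    then show False using \<open>b \<in> frel_class KG KF T Sigma k2\<close> \<open>k1 < k2\<close> unrelated
      unfolding frel_class_def by auto
  qed
  ultimately have "L $$ (j, i) = 0"
    using lower_factor_zero_across_uncorrelated_split[OF \<open>sym_mat Sigma\<close> \<open>pos_def_mat p Sigma\<close> L
        upper_triangular_L_mult_of_LDL_inverse[OF S \<open>unit_lower_triangular p L\<close> \<open>pos_diagonal p D\<close> inv]
        class_indices_uncorrelated[OF T p_def \<open>sym_mat Sigma\<close> S GG_diag FF_zero trans k2]]
    by blast
  then show "(1\<^sub>m p - L) $$ (j, i) = 0" using L \<open>i < j\<close> \<open>j < p\<close> by simp
qed

end
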